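(* Let $R$ be a ring and $I$ a nil ideal of $R$. (i) $R$ is GWNC if, and only if, $R/I$ is GWNC. (ii) $R$ is GWNC if, and only if, $J(R)$ is nil and $R/J(R)$ is GWNC.
   Context: All rings are associative with identity; $J(R)$ is the Jacobson radical. For a ring $S$, $U(S)$, ${\rm Nil}(S)$, ${\rm Id}(S)$ denote units, nilpotents, idempotents. $S$ is GWNC if every $a\in S\setminus U(S)$ can be written as $a=q+e$ or $a=q-e$ with $q\in{\rm Nil}(S)$, $e\in{\rm Id}(S)$. *)

theory Defs
  imports "HOL-Algebra.Algebra"
begin

definition nilpotents :: "('a, 'b) ring_scheme \<Rightarrow> 'a set" where
  "nilpotents R = {x \<in> carrier R. \<exists>n::nat. x [^]\<^bsub>R\<^esub> n = \<zero>\<^bsub>R\<^esub>}"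

definition idempotents :: "('a, 'b) ring_scheme \<Rightarrow> 'a set" where
  "idempotents R = {e \<in> carrier R. e \<otimes>\<^bsub>R\<^esub> e = e}"

definition GWNC :: "('a, 'b) ring_scheme \<Rightarrow> bool" where
  "GWNC R \<longleftrightarrow> (\<forall>a \<in> carrier R - Units R. \<exists>q \<in> nilpotents R. \<exists>e \<in> idempotents R.
       a = q \<oplus>\<^bsub>R\<^esub> e \<or> a = q \<ominus>\<^bsub>R\<^esub> e)"

definition nil_ideal :: "'a set \<Rightarrow> ('a, 'b) ring_scheme \<Rightarrow> bool" where
  "nil_ideal I R \<longleftrightarrow> ideal I R \<and> I \<subseteq> nilpotents R"

definition left_ideal :: "'a set \<Rightarrow> ('a, 'b) ring_scheme \<Rightarrow> bool" where
  "left_ideal L R \<longleftrightarrow> additive_subgroup L R \<and>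
     (\<forall>r \<in> carrier R. \<forall>x \<in> L. r \<otimes>\<^bsub>R\<^esub> x \<in> L)"

definition maximal_left_ideal :: "'a set \<Rightarrow> ('a, 'b) ring_scheme \<Rightarrow> bool" where
  "maximal_left_ideal M R \<longleftrightarrow> left_ideal M R \<and> M \<noteq> carrier R \<and>
     (\<forall>L. left_ideal L R \<and> M \<subseteq> L \<longrightarrow> L = M \<or> L = carrier R)"

(* Jacobson radical: intersection of all maximal left ideals (carrier R if there are none) *)
definition jacobson :: "('a, 'b) ring_scheme \<Rightarrow> 'a set" where
  "jacobson R = carrier R \<inter> \<Inter> {M. maximal_left_ideal M R}"

end

theory Submission
  imports Defs
begin

(* The quotient map R -> R/I sends units, nilpotents and idempotents to units, nilpotents and
   idempotents, so GWNC passes to every quotient.  Conversely, when I is nil, everything lifts: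
   if ba and ab are 1 modulo I they are units, so a is a unit; an idempotent of R/I lifts to an
   idempotent f of R by Newton's iteration in the commutative bicommutant of a preimage; and an
   element that is nilpotent modulo I is nilpotent.  So a + I = q +- e lifts to a = (a -+ f) +- f.
   For (ii), 1 - x is a unit for every x in J(R), so J(R) contains no nonzero idempotent.  If R is
   GWNC and j = q +- e lies in J(R), then modulo J(R) the idempotent e is a nilpotent (up to sign),
   hence zero; so e lies in J(R), e = 0, and j = q is nilpotent.  Part (i) for I = J(R) finishes. *)

section \<open>Nilpotent and idempotent elements\<close>

context ring
begin

lemma nilpotentsI: "x \<in> carrier R \<Longrightarrow> x [^] (n::nat) = \<zero> \<Longrightarrow> x \<in> nilpotents R"
  unfolding nilpotents_def by blast

lemma nilpotentsE:
  assumes "x \<in> nilpotents R"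
  obtains n :: nat where "x \<in> carrier R" "x [^] n = \<zero>"
  using assms unfolding nilpotents_def by blast

lemma nilpotents_subset: "nilpotents R \<subseteq> carrier R"
  unfolding nilpotents_def by blast

lemma idempotents_subset: "idempotents R \<subseteq> carrier R"
  unfolding idempotents_def by blast

lemma idempotents_idem: "e \<in> idempotents R \<Longrightarrow> e \<otimes> e = e"
  unfolding idempotents_def by blast

lemma nat_pow_eq_zero_mono:
  assumes "x \<in> carrier R" "x [^] (n::nat) = \<zero>" "n \<le> m"
  shows "x [^] m = \<zero>"
proof -
  obtain k where "m = n + k" using \<open>n \<le> m\<close> le_Suc_ex by blast
  then show ?thesis using assms(1,2) by (simp flip: nat_pow_mult)
qed

lemma a_inv_nilpotent:
  assumes "x \<in> nilpotents R"
  shows "\<ominus> x \<in> nilpotents R"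
proof -
  obtain n :: nat where x: "x \<in> carrier R" "x [^] n = \<zero>" using assms by (rule nilpotentsE)
  have "(\<ominus> x) [^] (2 * n) = ((\<ominus> x) [^] (2::nat)) [^] n" using x by (simp add: nat_pow_pow)
  also have "\<dots> = (x [^] (2::nat)) [^] n" using x by (simp add: numeral_2_eq_2 l_minus r_minus)
  also have "\<dots> = \<zero>" using x nat_pow_eq_zero_mono[of x n "2 * n"] by (simp add: nat_pow_pow)
  finally show ?thesis using x by (intro nilpotentsI) auto
qed

lemma nilpotent_if_nat_pow_nilpotent:
  assumes "x \<in> carrier R" "x [^] (n::nat) \<in> nilpotents R"
  shows "x \<in> nilpotents R"
proof -
  obtain k :: nat where "(x [^] n) [^] k = \<zero>" using assms(2) by (rule nilpotentsE)
  then show ?thesis using assms(1) by (intro nilpotentsI[of x "n * k"]) (simp_all add: nat_pow_pow)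
qed

lemma nilpotent_idempotent_eq_zero:
  assumes "e \<in> nilpotents R" "e \<in> idempotents R"
  shows "e = \<zero>"
proof -
  obtain n :: nat where e: "e \<in> carrier R" "e [^] n = \<zero>" using assms(1) by (rule nilpotentsE)
  have "e [^] Suc k = e" for k
    using e idempotents_idem[OF assms(2)] by (induction k) auto
  then show ?thesis using nat_pow_eq_zero_mono[OF e, of "Suc n"] by simp
qed

lemma idempotent_eq_zero_if_nilpotent_plus_minus:
  assumes "q \<in> nilpotents R" "e \<in> idempotents R" "q \<oplus> e = \<zero> \<or> q \<ominus> e = \<zero>"
  shows "e = \<zero>"
proof -
  have q: "q \<in> carrier R" and e: "e \<in> carrier R"
    using assms(1,2) nilpotents_subset idempotents_subset by blast+
  have "e = \<ominus> q \<or> e = q"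
    using assms(3) q e minus_equality[of e q] by (auto simp: a_comm)
  then have "e \<in> nilpotents R" using assms(1) a_inv_nilpotent by auto
  then show ?thesis using assms(2) by (rule nilpotent_idempotent_eq_zero)
qed

lemma minus_add_minus_cancel:
  assumes "a \<in> carrier R" "b \<in> carrier R" "c \<in> carrier R"
  shows "(a \<ominus> b) \<oplus> (c \<ominus> a) = c \<ominus> b"
  using assms by (simp add: minus_eq a_ac r_neg2)

lemma geometric_sum_mult:
  assumes x: "x \<in> carrier R"
  shows "(\<one> \<ominus> x) \<otimes> (\<Oplus>i\<in>{..<n}. x [^] (i::nat)) = \<one> \<ominus> x [^] n \<and>
         (\<Oplus>i\<in>{..<n}. x [^] i) \<otimes> (\<one> \<ominus> x) = \<one> \<ominus> x [^] n"
proof (induction n)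
  case 0
  then show ?case using x by (simp add: minus_eq r_neg)
next
  case (Suc n)
  have sum: "(\<Oplus>i\<in>{..<Suc n}. x [^] i) = x [^] n \<oplus> (\<Oplus>i\<in>{..<n}. x [^] i)"
    using x by (simp add: lessThan_Suc finsum_insert)
  have "(\<one> \<ominus> x) \<otimes> x [^] n = x [^] n \<ominus> x [^] Suc n"
    using x nat_pow_Suc2[OF x, of n] by (simp add: minus_eq l_distr l_minus)
  moreover have "x [^] n \<otimes> (\<one> \<ominus> x) = x [^] n \<ominus> x [^] Suc n"
    using x by (simp add: minus_eq r_distr r_minus)
  ultimately show ?case
    using Suc x minus_add_minus_cancel[of "x [^] n" "x [^] Suc n" \<one>]
    unfolding sum by (simp add: r_distr l_distr del: nat_pow_Suc)
qed

lemma Units_if_one_minus_nilpotent: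
  assumes "x \<in> carrier R" "\<one> \<ominus> x \<in> nilpotents R"
  shows "x \<in> Units R"
proof -
  obtain n :: nat where y: "\<one> \<ominus> x \<in> carrier R" "(\<one> \<ominus> x) [^] n = \<zero>"
    using assms(2) by (rule nilpotentsE)
  have "\<one> \<ominus> (\<one> \<ominus> x) = x" using assms(1) by (simp add: minus_eq minus_add a_assoc[symmetric] r_neg)
  then show ?thesis
    using geometric_sum_mult[OF y(1), of n] y assms(1) unfolding Units_def by (auto simp: minus_eq)
qed

end

lemma (in monoid) Units_if_mult_Units_both_orders:
  assumes a: "a \<in> carrier G" and b: "b \<in> carrier G"
    and ab: "a \<otimes> b \<in> Units G" and ba: "b \<otimes> a \<in> Units G"
  shows "a \<in> Units G"
proof -
  define l where "l = inv (b \<otimes> a) \<otimes> b"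
  define r where "r = b \<otimes> inv (a \<otimes> b)"
  have lr: "l \<in> carrier G" "r \<in> carrier G" using ab ba b by (simp_all add: l_def r_def)
  have l: "l \<otimes> a = \<one>" using ba a b by (simp add: l_def m_assoc)
  have r: "a \<otimes> r = \<one>" using ab a b by (simp add: r_def flip: m_assoc)
  have "l = r" by (rule inv_unique[OF l r a lr])
  then show ?thesis using a lr l r unfolding Units_def by auto
qed

section \<open>Lifting idempotents modulo nilpotent elements\<close>

(* The Newton step f + (f - f^2)(2f - 1) = 3f^2 - 2f^3 replaces the defect f - f^2 by a multiple
   of its square. *)
lemma (in cring) idempotent_Newton_step:
  assumes f: "f \<in> carrier R"
  defines "y \<equiv> f \<ominus> f \<otimes> f" and "w \<equiv> f \<oplus> f \<ominus> \<one>"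
  shows "(f \<oplus> y \<otimes> w) \<ominus> (f \<oplus> y \<otimes> w) \<otimes> (f \<oplus> y \<otimes> w)
       = y \<otimes> y \<otimes> (\<one> \<oplus> \<one> \<oplus> \<one> \<oplus> (y \<oplus> y \<oplus> y \<oplus> y))"
proof -
  have y: "y \<in> carrier R" and w: "w \<in> carrier R" using f by (simp_all add: y_def w_def)
  have "(f \<oplus> y \<otimes> w) \<ominus> (f \<oplus> y \<otimes> w) \<otimes> (f \<oplus> y \<otimes> w)
      = (f \<ominus> f \<otimes> f) \<oplus> y \<otimes> (w \<ominus> (f \<oplus> f) \<otimes> w) \<ominus> y \<otimes> y \<otimes> (w \<otimes> w)"
    using f y w by algebra
  also have "w \<ominus> (f \<oplus> f) \<otimes> w = \<ominus> (w \<otimes> w)"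
    unfolding w_def using f by algebra
  also have "w \<otimes> w = \<one> \<ominus> (y \<oplus> y \<oplus> y \<oplus> y)"
    unfolding w_def y_def using f by algebra
  finally show ?thesis
    unfolding y_def[symmetric] using y by algebra
qed

lemma (in cring) idempotent_lift_iteration:
  assumes e: "e \<in> carrier R" and x_def: "x = e \<ominus> e \<otimes> e"
  shows "\<exists>f c d. f \<in> carrier R \<and> c \<in> carrier R \<and> d \<in> carrier R \<and>
           f = e \<oplus> x \<otimes> c \<and> f \<ominus> f \<otimes> f = x [^] ((2::nat) ^ k) \<otimes> d"
proof (induction k)
  case 0
  show ?case
    by (rule exI[of _ e], rule exI[of _ \<zero>], rule exI[of _ \<one>]) (use e in \<open>simp add: x_def\<close>)
next
  case (Suc k)
  then obtain f c d where fcd: "f \<in> carrier R" "c \<in> carrier R" "d \<in> carrier R"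
    and f: "f = e \<oplus> x \<otimes> c" and defect: "f \<ominus> f \<otimes> f = x [^] ((2::nat) ^ k) \<otimes> d"
    by blast
  have x: "x \<in> carrier R" using e by (simp add: x_def)
  define p where "p = x [^] ((2::nat) ^ k - 1)"
  have p: "p \<in> carrier R" using x by (simp add: p_def)
  have "Suc (2 ^ k - 1) = (2::nat) ^ k" by simp
  then have xp: "x [^] ((2::nat) ^ k) = x \<otimes> p"
    unfolding p_def by (metis nat_pow_Suc2[OF x])
  define y where "y = f \<ominus> f \<otimes> f"
  define w where "w = f \<oplus> f \<ominus> \<one>"
  define t where "t = \<one> \<oplus> \<one> \<oplus> \<one> \<oplus> (y \<oplus> y \<oplus> y \<oplus> y)"
  have y: "y = x \<otimes> p \<otimes> d" using defect xp by (simp add: y_def)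
  have wt: "w \<in> carrier R" "t \<in> carrier R" using fcd x p by (simp_all add: w_def t_def y)
  have f'_eq: "f \<oplus> y \<otimes> w = e \<oplus> x \<otimes> (c \<oplus> p \<otimes> d \<otimes> w)"
    unfolding y f using e fcd x p wt by algebra
  have "(f \<oplus> y \<otimes> w) \<ominus> (f \<oplus> y \<otimes> w) \<otimes> (f \<oplus> y \<otimes> w) = y \<otimes> y \<otimes> t"
    unfolding y_def w_def t_def by (rule idempotent_Newton_step[OF fcd(1)])
  also have "\<dots> = (x \<otimes> p) \<otimes> (x \<otimes> p) \<otimes> (d \<otimes> d \<otimes> t)"
    unfolding y using fcd x p wt by algebra
  also have "(x \<otimes> p) \<otimes> (x \<otimes> p) = x [^] ((2::nat) ^ Suc k)"
    using x by (simp add: mult_2 flip: xp nat_pow_mult)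
  finally have f'_defect: "(f \<oplus> y \<otimes> w) \<ominus> (f \<oplus> y \<otimes> w) \<otimes> (f \<oplus> y \<otimes> w)
      = x [^] ((2::nat) ^ Suc k) \<otimes> (d \<otimes> d \<otimes> t)" .
  show ?case
    by (rule exI[of _ "f \<oplus> y \<otimes> w"], rule exI[of _ "c \<oplus> p \<otimes> d \<otimes> w"],
        rule exI[of _ "d \<otimes> d \<otimes> t"]) (use f'_eq f'_defect e fcd x p wt in simp)
qed

lemma (in cring) idempotent_lift_cring:
  assumes e: "e \<in> carrier R" and nil: "(e \<ominus> e \<otimes> e) [^] (m::nat) = \<zero>"
  obtains f c where "f \<in> carrier R" "c \<in> carrier R" "f \<otimes> f = f" "f = e \<oplus> (e \<ominus> e \<otimes> e) \<otimes> c"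
proof -
  define x where "x = e \<ominus> e \<otimes> e"
  have x: "x \<in> carrier R" using e by (simp add: x_def)
  obtain f c d where fcd: "f \<in> carrier R" "c \<in> carrier R" "d \<in> carrier R"
    and f: "f = e \<oplus> x \<otimes> c" and defect: "f \<ominus> f \<otimes> f = x [^] ((2::nat) ^ m) \<otimes> d"
    using idempotent_lift_iteration[OF e x_def] by blast
  have "x [^] ((2::nat) ^ m) = \<zero>"
    using nat_pow_eq_zero_mono[OF x _ less_imp_le[OF less_exp]] nil by (simp add: x_def)
  then have "f \<otimes> f = f" using defect fcd by simp
  then show ?thesis using that fcd f by (simp add: x_def)
qed

(* A commutative subring containing a, in which idempotents can be lifted by the commutative
   computation above. *)
definition bicommutant :: "('a, 'b) ring_scheme \<Rightarrow> 'a \<Rightarrow> 'a set" where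
  "bicommutant R a =
     {y \<in> carrier R. \<forall>z \<in> carrier R. z \<otimes>\<^bsub>R\<^esub> a = a \<otimes>\<^bsub>R\<^esub> z \<longrightarrow> y \<otimes>\<^bsub>R\<^esub> z = z \<otimes>\<^bsub>R\<^esub> y}"

context ring
begin

lemma bicommutant_subset: "bicommutant R a \<subseteq> carrier R"
  unfolding bicommutant_def by blast

lemma bicommutant_commute:
  "y \<in> bicommutant R a \<Longrightarrow> z \<in> carrier R \<Longrightarrow> z \<otimes> a = a \<otimes> z \<Longrightarrow> y \<otimes> z = z \<otimes> y"
  unfolding bicommutant_def by blast

lemma bicommutantI:
  "y \<in> carrier R \<Longrightarrow> (\<And>z. z \<in> carrier R \<Longrightarrow> z \<otimes> a = a \<otimes> z \<Longrightarrow> y \<otimes> z = z \<otimes> y)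
    \<Longrightarrow> y \<in> bicommutant R a"
  unfolding bicommutant_def by blast

lemma self_in_bicommutant: "a \<in> carrier R \<Longrightarrow> a \<in> bicommutant R a"
  by (rule bicommutantI) simp_all

lemma bicommutant_subcring:
  assumes a: "a \<in> carrier R"
  shows "subcring (bicommutant R a) R"
proof (rule subcringI)
  let ?B = "bicommutant R a"
  show "subring ?B R"
  proof (rule subringI)
    show "\<one> \<in> ?B" by (rule bicommutantI) simp_all
  next
    fix y1 y2 assume y: "y1 \<in> ?B" "y2 \<in> ?B"
    then have y1: "y1 \<in> carrier R" and y2: "y2 \<in> carrier R" using bicommutant_subset by auto
    show "\<ominus> y1 \<in> ?B"
      using y1 bicommutant_commute[OF y(1)] by (intro bicommutantI) (simp_all add: l_minus r_minus)
    show "y1 \<oplus> y2 \<in> ?B"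
      using y1 y2 bicommutant_commute[OF y(1)] bicommutant_commute[OF y(2)]
      by (intro bicommutantI) (simp_all add: l_distr r_distr)
    show "y1 \<otimes> y2 \<in> ?B"
    proof (rule bicommutantI)
      fix z assume z: "z \<in> carrier R" "z \<otimes> a = a \<otimes> z"
      have "y1 \<otimes> y2 \<otimes> z = y1 \<otimes> (z \<otimes> y2)"
        using y1 y2 z bicommutant_commute[OF y(2) z] by (simp add: m_assoc)
      also have "\<dots> = z \<otimes> (y1 \<otimes> y2)"
        using y1 y2 z bicommutant_commute[OF y(1) z] by (simp flip: m_assoc)
      finally show "y1 \<otimes> y2 \<otimes> z = z \<otimes> (y1 \<otimes> y2)" .
    qed (use y1 y2 in simp)
  qed (rule bicommutant_subset)
next
  fix y1 y2 assume y: "y1 \<in> bicommutant R a" "y2 \<in> bicommutant R a"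
  have "y2 \<otimes> a = a \<otimes> y2" by (rule bicommutant_commute[OF y(2) a refl])
  then show "y1 \<otimes> y2 = y2 \<otimes> y1"
    using bicommutant_commute[OF y(1)] y(2) bicommutant_subset by blast
qed

lemma subring_a_inv_consistent:
  assumes "subring H R" "h \<in> H"
  shows "\<ominus>\<^bsub>R\<lparr>carrier := H\<rparr>\<^esub> h = \<ominus> h"
  using assms group.m_inv_consistent[of "add_monoid R" H] a_comm_group
  unfolding subring_def comm_group_def a_inv_def by auto

lemma idempotent_lift:
  assumes e: "e \<in> carrier R" and nil: "e \<ominus> e \<otimes> e \<in> nilpotents R"
  obtains f c where "f \<in> idempotents R" "c \<in> carrier R" "f = e \<oplus> (e \<ominus> e \<otimes> e) \<otimes> c"
proof -
  let ?B = "bicommutant R e"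
  let ?S = "R\<lparr>carrier := ?B\<rparr>"
  have sub: "subcring ?B R" by (rule bicommutant_subcring[OF e])
  interpret S: cring ?S
    using subcring_iff[OF bicommutant_subset] sub by blast
  have eB: "e \<in> ?B" by (rule self_in_bicommutant[OF e])
  then have "e \<otimes> e \<in> ?B" using S.m_closed[of e e] by simp
  then have minus_S: "e \<ominus>\<^bsub>?S\<^esub> e \<otimes> e = e \<ominus> e \<otimes> e"
    using subring_a_inv_consistent[OF subcring.axioms(1)[OF sub]] by (simp add: a_minus_def)
  obtain m :: nat where "(e \<ominus> e \<otimes> e) [^] m = \<zero>" using nil by (rule nilpotentsE)
  then have "(e \<ominus>\<^bsub>?S\<^esub> e \<otimes>\<^bsub>?S\<^esub> e) [^]\<^bsub>?S\<^esub> m = \<zero>\<^bsub>?S\<^esub>"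
    by (simp add: minus_S flip: nat_pow_consistent)
  then obtain f c where "f \<in> ?B" "c \<in> ?B" "f \<otimes> f = f" "f = e \<oplus> (e \<ominus> e \<otimes> e) \<otimes> c"
    using S.idempotent_lift_cring[of e m] eB minus_S by auto
  then show ?thesis
    using that bicommutant_subset unfolding idempotents_def by blast
qed

end

section \<open>The Jacobson radical\<close>

context ring
begin

lemma left_idealI:
  assumes sub: "L \<subseteq> carrier R" and zero: "\<zero> \<in> L"
    and add: "\<And>x y. x \<in> L \<Longrightarrow> y \<in> L \<Longrightarrow> x \<oplus> y \<in> L"
    and mult: "\<And>r x. r \<in> carrier R \<Longrightarrow> x \<in> L \<Longrightarrow> r \<otimes> x \<in> L"
  shows "left_ideal L R"
proof -
  have "\<ominus> x \<in> L" if "x \<in> L" for x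
    using mult[OF _ that, of "\<ominus> \<one>"] that sub by (auto simp: l_minus)
  then have "subgroup L (add_monoid R)"
    using sub zero add by (intro add.subgroupI) (auto simp: a_inv_def)
  then show ?thesis unfolding left_ideal_def using mult by (auto intro: additive_subgroupI)
qed

lemma left_idealD:
  assumes "left_ideal L R"
  shows "L \<subseteq> carrier R" "\<zero> \<in> L" "\<And>x y. x \<in> L \<Longrightarrow> y \<in> L \<Longrightarrow> x \<oplus> y \<in> L"
    "\<And>x. x \<in> L \<Longrightarrow> \<ominus> x \<in> L" "\<And>r x. r \<in> carrier R \<Longrightarrow> x \<in> L \<Longrightarrow> r \<otimes> x \<in> L"
  using assms unfolding left_ideal_def
  by (auto simp: additive_subgroup.a_subset additive_subgroup.zero_closed
      additive_subgroup.a_closed additive_subgroup.a_inv_closed)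

lemma left_ideal_eq_carrier:
  assumes "left_ideal L R" "\<one> \<in> L"
  shows "L = carrier R"
  using left_idealD(1)[OF assms(1)] left_idealD(5)[OF assms(1) _ assms(2)] by auto

lemma left_ideal_zero: "left_ideal {\<zero>} R"
  by (rule left_idealI) auto

lemma left_ideal_add_principal:
  assumes M: "left_ideal M R" and x: "x \<in> carrier R"
  shows "left_ideal {m \<oplus> r \<otimes> x | m r. m \<in> M \<and> r \<in> carrier R} R"
proof (rule left_idealI)
  note M' = left_idealD[OF M]
  show "{m \<oplus> r \<otimes> x | m r. m \<in> M \<and> r \<in> carrier R} \<subseteq> carrier R" using M' x by auto
  have "\<zero> = \<zero> \<oplus> \<zero> \<otimes> x" using x by simp
  then show "\<zero> \<in> {m \<oplus> r \<otimes> x | m r. m \<in> M \<and> r \<in> carrier R}" using M' by blast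
next
  fix u v assume "u \<in> {m \<oplus> r \<otimes> x | m r. m \<in> M \<and> r \<in> carrier R}"
    "v \<in> {m \<oplus> r \<otimes> x | m r. m \<in> M \<and> r \<in> carrier R}"
  then obtain m r m' r' where mr: "m \<in> M" "r \<in> carrier R" "m' \<in> M" "r' \<in> carrier R"
    and "u = m \<oplus> r \<otimes> x" "v = m' \<oplus> r' \<otimes> x" by blast
  moreover have "m \<in> carrier R" "m' \<in> carrier R" using mr left_idealD(1)[OF M] by auto
  ultimately have "u \<oplus> v = (m \<oplus> m') \<oplus> (r \<oplus> r') \<otimes> x" using x by (simp add: l_distr a_ac)
  then show "u \<oplus> v \<in> {m \<oplus> r \<otimes> x | m r. m \<in> M \<and> r \<in> carrier R}"
    using mr left_idealD(3)[OF M] by blast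
next
  fix s u assume s: "s \<in> carrier R" and "u \<in> {m \<oplus> r \<otimes> x | m r. m \<in> M \<and> r \<in> carrier R}"
  then obtain m r where mr: "m \<in> M" "r \<in> carrier R" and "u = m \<oplus> r \<otimes> x" by blast
  moreover have "m \<in> carrier R" using mr left_idealD(1)[OF M] by auto
  ultimately have "s \<otimes> u = s \<otimes> m \<oplus> (s \<otimes> r) \<otimes> x" using x s by (simp add: r_distr m_assoc)
  then show "s \<otimes> u \<in> {m \<oplus> r \<otimes> x | m r. m \<in> M \<and> r \<in> carrier R}"
    using mr s left_idealD(5)[OF M] by blast
qed

lemma left_ideal_chain_Union:
  assumes "C \<noteq> {}" "\<And>L. L \<in> C \<Longrightarrow> left_ideal L R"
    and chain: "\<And>L L'. L \<in> C \<Longrightarrow> L' \<in> C \<Longrightarrow> L \<subseteq> L' \<or> L' \<subseteq> L"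
  shows "left_ideal (\<Union>C) R"
proof (rule left_idealI)
  show "\<Union>C \<subseteq> carrier R" "\<zero> \<in> \<Union>C" using assms(1,2) left_idealD(1,2) by blast+
next
  fix x y assume "x \<in> \<Union>C" "y \<in> \<Union>C"
  then obtain L L' where "L \<in> C" "L' \<in> C" "x \<in> L" "y \<in> L'" by blast
  then show "x \<oplus> y \<in> \<Union>C"
    using chain[of L L'] assms(2) left_idealD(3) by blast
next
  fix r x assume "r \<in> carrier R" "x \<in> \<Union>C"
  then show "r \<otimes> x \<in> \<Union>C" using assms(2) left_idealD(5) by blast
qed

lemma exists_maximal_left_ideal:
  assumes "left_ideal L R" "\<one> \<notin> L"
  obtains M where "maximal_left_ideal M R" "L \<subseteq> M"
proof -
  let ?A = "{L'. left_ideal L' R \<and> L \<subseteq> L' \<and> \<one> \<notin> L'}"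
  have "\<exists>M \<in> ?A. \<forall>L' \<in> ?A. M \<subseteq> L' \<longrightarrow> L' = M"
  proof (rule subset_Zorn_nonempty)
    fix C assume "C \<noteq> {}" "subset.chain ?A C"
    then show "\<Union>C \<in> ?A"
      using left_ideal_chain_Union[of C] unfolding subset_chain_def by blast
  qed (use assms in blast)
  then obtain M where M: "M \<in> ?A" and max: "\<forall>L' \<in> ?A. M \<subseteq> L' \<longrightarrow> L' = M" by blast
  have "maximal_left_ideal M R"
    unfolding maximal_left_ideal_def
    using M max left_ideal_eq_carrier by blast
  then show ?thesis using that M by blast
qed

lemma maximal_left_idealD:
  assumes "maximal_left_ideal M R"
  shows "left_ideal M R" "\<one> \<notin> M"
  using assms left_ideal_eq_carrier unfolding maximal_left_ideal_def by blast+

lemma jacobson_subset: "jacobson R \<subseteq> carrier R"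
  unfolding jacobson_def by blast

lemma jacobsonD: "x \<in> jacobson R \<Longrightarrow> maximal_left_ideal M R \<Longrightarrow> x \<in> M"
  unfolding jacobson_def by blast

lemma jacobsonI: "x \<in> carrier R \<Longrightarrow> (\<And>M. maximal_left_ideal M R \<Longrightarrow> x \<in> M) \<Longrightarrow> x \<in> jacobson R"
  unfolding jacobson_def by blast

lemma jacobson_left_ideal: "left_ideal (jacobson R) R"
  by (rule left_idealI)
    (auto simp: jacobson_def dest: maximal_left_idealD(1) left_idealD(2,3,5))

lemma jacobson_left_inverse:
  assumes x: "x \<in> jacobson R" and r: "r \<in> carrier R"
  obtains y where "y \<in> carrier R" "y \<otimes> (\<one> \<ominus> r \<otimes> x) = \<one>"
proof -
  have xc: "x \<in> carrier R" using x jacobson_subset by blast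
  let ?a = "\<one> \<ominus> r \<otimes> x"
  let ?L = "{m \<oplus> s \<otimes> ?a | m s. m \<in> {\<zero>} \<and> s \<in> carrier R}"
  have L: "left_ideal ?L R" by (rule left_ideal_add_principal[OF left_ideal_zero]) (use xc r in simp)
  have "\<one> \<in> ?L"
  proof (rule ccontr)
    assume "\<one> \<notin> ?L"
    then obtain M where M: "maximal_left_ideal M R" "?L \<subseteq> M"
      using exists_maximal_left_ideal[OF L] by blast
    have "?a = \<zero> \<oplus> \<one> \<otimes> ?a" using xc r by simp
    then have "?a \<in> M" using M(2) by blast
    moreover have "r \<otimes> x \<in> M"
      using jacobsonD[OF x M(1)] r left_idealD(5)[OF maximal_left_idealD(1)[OF M(1)]] by blast
    ultimately have "?a \<oplus> r \<otimes> x \<in> M" using left_idealD(3)[OF maximal_left_idealD(1)[OF M(1)]] by blast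
    moreover have "?a \<oplus> r \<otimes> x = \<one>" using xc r by (simp add: minus_eq a_assoc l_neg)
    ultimately show False using maximal_left_idealD(2)[OF M(1)] by simp
  qed
  then show ?thesis using that xc r by auto
qed

lemma jacobson_one_minus_Units:
  assumes x: "x \<in> jacobson R"
  shows "\<one> \<ominus> x \<in> Units R"
proof -
  have xc: "x \<in> carrier R" using x jacobson_subset by blast
  obtain a where a: "a \<in> carrier R" and ax: "a \<otimes> (\<one> \<ominus> x) = \<one>"
    using jacobson_left_inverse[OF x one_closed] xc by auto
  \<comment> \<open>the left inverse a = 1 - (- a) x is again of the form 1 - r x, so it has a left inverse too\<close>
  have "a = (a \<ominus> a \<otimes> x) \<oplus> a \<otimes> x" using a xc by (simp add: minus_eq a_assoc l_neg)
  also have "a \<ominus> a \<otimes> x = \<one>" using ax a xc by (simp add: minus_eq r_distr r_minus)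
  also have "\<one> \<oplus> a \<otimes> x = \<one> \<ominus> (\<ominus> a) \<otimes> x" using a xc by (simp add: minus_eq l_minus)
  finally have "a = \<one> \<ominus> (\<ominus> a) \<otimes> x" .
  moreover obtain b where "b \<in> carrier R" "b \<otimes> (\<one> \<ominus> (\<ominus> a) \<otimes> x) = \<one>"
    using jacobson_left_inverse[OF x a_inv_closed[OF a]] .
  ultimately have b: "b \<in> carrier R" "b \<otimes> a = \<one>" by simp_all
  have "b = \<one> \<ominus> x" using inv_unique[OF b(2) ax] a b xc by simp
  then show ?thesis using a ax b xc unfolding Units_def by auto
qed

lemma jacobsonI_left_inverse:
  assumes x: "x \<in> carrier R"
    and inv: "\<And>r. r \<in> carrier R \<Longrightarrow> \<exists>y \<in> carrier R. y \<otimes> (\<one> \<ominus> r \<otimes> x) = \<one>"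
  shows "x \<in> jacobson R"
proof (rule jacobsonI[OF x], rule ccontr)
  fix M assume M: "maximal_left_ideal M R" and "x \<notin> M"
  note M' = left_idealD[OF maximal_left_idealD(1)[OF M]]
  let ?L = "{m \<oplus> r \<otimes> x | m r. m \<in> M \<and> r \<in> carrier R}"
  have "m \<in> ?L" if "m \<in> M" for m
    using that M'(1) x by (intro CollectI exI[of _ m] exI[of _ \<zero>]) auto
  moreover have "x \<in> ?L"
    using M'(2) x by (intro CollectI exI[of _ \<zero>] exI[of _ \<one>]) simp
  ultimately have "?L = carrier R"
    using M \<open>x \<notin> M\<close> left_ideal_add_principal[OF maximal_left_idealD(1)[OF M] x]
    unfolding maximal_left_ideal_def by blast
  then obtain m r where mr: "m \<in> M" "r \<in> carrier R" "\<one> = m \<oplus> r \<otimes> x"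
    using one_closed by blast
  have "\<one> \<ominus> r \<otimes> x = m"
    using mr M'(1) x by (simp add: subsetD minus_eq a_assoc r_neg)
  moreover obtain y where "y \<in> carrier R" "y \<otimes> (\<one> \<ominus> r \<otimes> x) = \<one>" using inv[OF mr(2)] by blast
  ultimately have "\<one> \<in> M" using M'(5) mr(1) by metis
  then show False using maximal_left_idealD(2)[OF M] by blast
qed

lemma one_minus_mult_left_inverse_swap:
  assumes a: "a \<in> carrier R" and b: "b \<in> carrier R" and u: "u \<in> carrier R"
    and inv: "u \<otimes> (\<one> \<ominus> b \<otimes> a) = \<one>"
  shows "(\<one> \<oplus> a \<otimes> u \<otimes> b) \<otimes> (\<one> \<ominus> a \<otimes> b) = \<one>"
proof -
  have "b \<otimes> (\<one> \<ominus> a \<otimes> b) = (\<one> \<ominus> b \<otimes> a) \<otimes> b"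
    using a b by (simp add: minus_eq r_distr l_distr r_minus l_minus m_assoc)
  then have "a \<otimes> u \<otimes> b \<otimes> (\<one> \<ominus> a \<otimes> b) = a \<otimes> (u \<otimes> (\<one> \<ominus> b \<otimes> a)) \<otimes> b"
    using a b u by (simp add: m_assoc)
  also have "\<dots> = a \<otimes> b" using inv a b by simp
  finally have "a \<otimes> u \<otimes> b \<otimes> (\<one> \<ominus> a \<otimes> b) = a \<otimes> b" .
  then show ?thesis
    using a b u by (simp add: l_distr minus_eq a_assoc l_neg)
qed

lemma jacobson_r_closed:
  assumes x: "x \<in> jacobson R" and s: "s \<in> carrier R"
  shows "x \<otimes> s \<in> jacobson R"
proof (rule jacobsonI_left_inverse)
  have xc: "x \<in> carrier R" using x jacobson_subset by blast
  then show "x \<otimes> s \<in> carrier R" using s by simp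
  fix r assume r: "r \<in> carrier R"
  have "s \<otimes> r \<otimes> x \<in> jacobson R" using left_idealD(5)[OF jacobson_left_ideal _ x] s r by simp
  then have U: "\<one> \<ominus> s \<otimes> (r \<otimes> x) \<in> Units R"
    using jacobson_one_minus_Units s r xc by (simp add: m_assoc)
  have "(\<one> \<oplus> r \<otimes> x \<otimes> inv (\<one> \<ominus> s \<otimes> (r \<otimes> x)) \<otimes> s) \<otimes> (\<one> \<ominus> r \<otimes> x \<otimes> s) = \<one>"
    using one_minus_mult_left_inverse_swap[of "r \<otimes> x" s] U r s xc by simp
  then show "\<exists>y \<in> carrier R. y \<otimes> (\<one> \<ominus> r \<otimes> (x \<otimes> s)) = \<one>"
    using U r s xc by (metis Units_inv_closed a_closed m_assoc m_closed one_closed)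
qed

lemma jacobson_ideal: "ideal (jacobson R) R"
proof (rule idealI)
  show "subgroup (jacobson R) (add_monoid R)"
    using jacobson_left_ideal unfolding left_ideal_def additive_subgroup_def by blast
qed (use ring_axioms left_idealD(5)[OF jacobson_left_ideal] jacobson_r_closed in auto)

lemma jacobson_Units_trivial:
  assumes "x \<in> jacobson R" "x \<in> Units R"
  shows "\<one> = \<zero>"
proof -
  have "\<one> \<in> jacobson R"
    using left_idealD(5)[OF jacobson_left_ideal Units_inv_closed[OF assms(2)] assms(1)] assms(2) by simp
  then have "\<one> \<ominus> \<one> \<in> Units R" using assms(2) jacobson_one_minus_Units by simp
  then show ?thesis unfolding Units_def by (auto simp: minus_eq r_neg)
qed

lemma idempotent_in_jacobson_eq_zero:
  assumes e: "e \<in> idempotents R" "e \<in> jacobson R"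
  shows "e = \<zero>"
proof -
  have ec: "e \<in> carrier R" and ee: "e \<otimes> e = e"
    using e(1) idempotents_subset idempotents_idem by blast+
  have U: "\<one> \<ominus> e \<in> Units R" using jacobson_one_minus_Units[OF e(2)] .
  have "(\<one> \<ominus> e) \<otimes> e = \<zero>" using ec ee by (simp add: minus_eq l_distr l_minus r_neg)
  then have "inv (\<one> \<ominus> e) \<otimes> ((\<one> \<ominus> e) \<otimes> e) = \<zero>" using U by simp
  then show ?thesis using U ec by (simp flip: m_assoc)
qed

end

section \<open>GWNC rings and surjective homomorphisms\<close>

context ring_hom_ring
begin

lemma hom_minus: "x \<in> carrier R \<Longrightarrow> y \<in> carrier R \<Longrightarrow> h (x \<ominus> y) = h x \<ominus>\<^bsub>S\<^esub> h y"
  by (simp add: R.minus_eq S.minus_eq)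

lemma hom_nilpotent:
  assumes "x \<in> nilpotents R"
  shows "h x \<in> nilpotents S"
proof -
  obtain n :: nat where "x \<in> carrier R" "x [^] n = \<zero>" using assms by (rule R.nilpotentsE)
  then show ?thesis by (intro S.nilpotentsI[of _ n]) (simp_all flip: hom_nat_pow)
qed

lemma hom_idempotent: "e \<in> idempotents R \<Longrightarrow> h e \<in> idempotents S"
  unfolding idempotents_def by (metis (mono_tags, lifting) hom_closed hom_mult mem_Collect_eq)

lemma hom_Units:
  assumes "x \<in> Units R"
  shows "h x \<in> Units S"
proof -
  have "h (inv x) \<otimes>\<^bsub>S\<^esub> h x = \<one>\<^bsub>S\<^esub>" "h x \<otimes>\<^bsub>S\<^esub> h (inv x) = \<one>\<^bsub>S\<^esub>"
    using hom_mult[OF R.Units_inv_closed R.Units_closed, of x x] hom_mult[OF R.Units_closed R.Units_inv_closed, of x x]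
      assms by simp_all
  moreover have "h x \<in> carrier S" "h (inv x) \<in> carrier S"
    using R.Units_closed[OF assms] R.Units_inv_closed[OF assms] by simp_all
  ultimately show ?thesis unfolding Units_def by blast
qed

lemma GWNC_hom_image:
  assumes surj: "h ` carrier R = carrier S" and G: "GWNC R"
  shows "GWNC S"
  unfolding GWNC_def
proof
  fix A assume A: "A \<in> carrier S - Units S"
  then obtain a where a: "a \<in> carrier R" "A = h a" using surj by blast
  then have "a \<notin> Units R" using A hom_Units by blast
  then obtain q e where q: "q \<in> nilpotents R" and e: "e \<in> idempotents R"
    and "a = q \<oplus> e \<or> a = q \<ominus> e" using G a unfolding GWNC_def by blast
  moreover have "q \<in> carrier R" "e \<in> carrier R"
    using q e R.nilpotents_subset R.idempotents_subset by blast+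
  ultimately have "A = h q \<oplus>\<^bsub>S\<^esub> h e \<or> A = h q \<ominus>\<^bsub>S\<^esub> h e"
    using a by (auto simp: hom_minus)
  then show "\<exists>q \<in> nilpotents S. \<exists>e \<in> idempotents S. A = q \<oplus>\<^bsub>S\<^esub> e \<or> A = q \<ominus>\<^bsub>S\<^esub> e"
    using hom_nilpotent[OF q] hom_idempotent[OF e] by blast
qed

context
  assumes surj: "h ` carrier R = carrier S" and nil_kernel: "a_kernel R S h \<subseteq> nilpotents R"
begin

lemma nilpotent_if_hom_eq_zero: "x \<in> carrier R \<Longrightarrow> h x = \<zero>\<^bsub>S\<^esub> \<Longrightarrow> x \<in> nilpotents R"
  using nil_kernel unfolding a_kernel_def' by blast

lemma nilpotent_if_hom_nilpotent:
  assumes a: "a \<in> carrier R" and "h a \<in> nilpotents S"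
  shows "a \<in> nilpotents R"
proof -
  obtain n :: nat where "h a [^]\<^bsub>S\<^esub> n = \<zero>\<^bsub>S\<^esub>" using assms(2) by (rule S.nilpotentsE)
  then have "a [^] n \<in> nilpotents R" using a by (intro nilpotent_if_hom_eq_zero) (simp_all add: hom_nat_pow)
  then show ?thesis by (rule R.nilpotent_if_nat_pow_nilpotent[OF a])
qed

lemma Units_if_hom_Units:
  assumes a: "a \<in> carrier R" and U: "h a \<in> Units S"
  shows "a \<in> Units R"
proof -
  have "inv\<^bsub>S\<^esub> h a \<in> h ` carrier R" unfolding surj by (rule S.Units_inv_closed[OF U])
  then obtain b where b: "b \<in> carrier R" and hb: "h b = inv\<^bsub>S\<^esub> h a" by auto
  have "h (b \<otimes> a) = \<one>\<^bsub>S\<^esub>" "h (a \<otimes> b) = \<one>\<^bsub>S\<^esub>"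
    using a b U by (simp_all add: hb)
  then have "\<one> \<ominus> a \<otimes> b \<in> nilpotents R" "\<one> \<ominus> b \<otimes> a \<in> nilpotents R"
    using a b by (auto intro!: nilpotent_if_hom_eq_zero simp: hom_minus)
  then show ?thesis
    using a b by (intro R.Units_if_mult_Units_both_orders[OF a b] R.Units_if_one_minus_nilpotent) simp_all
qed

lemma idempotent_lift_hom:
  assumes e: "e \<in> carrier R" and "h e \<in> idempotents S"
  obtains f where "f \<in> idempotents R" "h f = h e"
proof -
  have defect: "h (e \<ominus> e \<otimes> e) = \<zero>\<^bsub>S\<^esub>"
    using assms S.idempotents_idem by (simp add: hom_minus)
  then obtain f c where f: "f \<in> idempotents R" "c \<in> carrier R" "f = e \<oplus> (e \<ominus> e \<otimes> e) \<otimes> c"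
    using R.idempotent_lift[OF e nilpotent_if_hom_eq_zero] e by auto
  have "h f = h e" using f(2,3) defect e by simp
  then show ?thesis using that f(1) by blast
qed

lemma GWNC_if_GWNC_hom_image:
  assumes G: "GWNC S"
  shows "GWNC R"
  unfolding GWNC_def
proof
  fix a assume a: "a \<in> carrier R - Units R"
  then have "h a \<in> carrier S - Units S" using Units_if_hom_Units by auto
  then obtain Q E where Q: "Q \<in> nilpotents S" and E: "E \<in> idempotents S"
    and dec: "h a = Q \<oplus>\<^bsub>S\<^esub> E \<or> h a = Q \<ominus>\<^bsub>S\<^esub> E"
    using G unfolding GWNC_def by blast
  have Qc: "Q \<in> carrier S" and Ec: "E \<in> carrier S"
    using Q E S.nilpotents_subset S.idempotents_subset by blast+
  then obtain e where e: "e \<in> carrier R" "h e = E" unfolding surj[symmetric] by blast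
  obtain f where f: "f \<in> idempotents R" "h f = E"
    using idempotent_lift_hom[OF e(1)] E unfolding e(2) by blast
  have fc: "f \<in> carrier R" using f R.idempotents_subset by blast
  from dec show "\<exists>q \<in> nilpotents R. \<exists>e \<in> idempotents R. a = q \<oplus> e \<or> a = q \<ominus> e"
  proof
    assume "h a = Q \<oplus>\<^bsub>S\<^esub> E"
    then have "h (a \<ominus> f) = Q" using a fc f Qc Ec by (simp add: hom_minus S.minus_eq S.a_assoc S.r_neg)
    then have "a \<ominus> f \<in> nilpotents R" using Q a fc by (intro nilpotent_if_hom_nilpotent) simp_all
    moreover have "a = (a \<ominus> f) \<oplus> f" using a fc by (simp add: R.minus_eq R.a_assoc R.l_neg)
    ultimately show ?thesis using f by blast
  next
    assume "h a = Q \<ominus>\<^bsub>S\<^esub> E"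
    then have "h (a \<oplus> f) = Q" using a fc f Qc Ec by (simp add: S.minus_eq S.a_assoc S.l_neg)
    then have "a \<oplus> f \<in> nilpotents R" using Q a fc by (intro nilpotent_if_hom_nilpotent) simp_all
    moreover have "a = (a \<oplus> f) \<ominus> f" using a fc by (simp add: R.minus_eq R.a_assoc R.r_neg)
    ultimately show ?thesis using f by blast
  qed
qed

end

end

context ring
begin

lemma rcos_image_carrier: "(+>) I ` carrier R = carrier (R Quot I)"
  unfolding FactRing_def A_RCOSETS_def' by auto

lemma rcos_eq_zero_iff:
  assumes "ideal I R" "x \<in> carrier R"
  shows "I +> x = \<zero>\<^bsub>R Quot I\<^esub> \<longleftrightarrow> x \<in> I"
  using quotient_eq_iff_same_a_r_cos[OF assms zero_closed] assms ideal.Icarr[OF assms(1)]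
  by (simp add: a_minus_def subsetI FactRing_def)

lemma a_kernel_rcos:
  assumes "ideal I R"
  shows "a_kernel R (R Quot I) ((+>) I) = I"
  unfolding a_kernel_def' using rcos_eq_zero_iff[OF assms] ideal.Icarr[OF assms] by auto

lemma GWNC_iff_GWNC_Quot:
  assumes I: "ideal I R" and nil: "I \<subseteq> nilpotents R"
  shows "GWNC R \<longleftrightarrow> GWNC (R Quot I)"
proof -
  note surj = rcos_image_carrier[of I] and kernel = a_kernel_rcos[OF I]
  interpret ring_hom_ring R "R Quot I" "(+>) I" by (rule ideal.rcos_ring_hom_ring[OF I])
  show ?thesis
    using GWNC_hom_image[OF surj] GWNC_if_GWNC_hom_image[OF surj, unfolded kernel, OF nil] by blast
qed

lemma idempotent_in_ideal_if_nilpotent_plus_minus: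
  assumes I: "ideal I R" and q: "q \<in> nilpotents R" and e: "e \<in> idempotents R"
    and "q \<oplus> e \<in> I \<or> q \<ominus> e \<in> I"
  shows "e \<in> I"
proof -
  have qc: "q \<in> carrier R" and ec: "e \<in> carrier R"
    using q e nilpotents_subset idempotents_subset by blast+
  have zero: "I +> (q \<oplus> e) = \<zero>\<^bsub>R Quot I\<^esub> \<or> I +> (q \<ominus> e) = \<zero>\<^bsub>R Quot I\<^esub>"
    using assms(4) rcos_eq_zero_iff[OF I] qc ec by simp
  interpret Q: ring_hom_ring R "R Quot I" "(+>) I" by (rule ideal.rcos_ring_hom_ring[OF I])
  from zero have "(I +> q) \<oplus>\<^bsub>R Quot I\<^esub> (I +> e) = \<zero>\<^bsub>R Quot I\<^esub> \<or>
      (I +> q) \<ominus>\<^bsub>R Quot I\<^esub> (I +> e) = \<zero>\<^bsub>R Quot I\<^esub>"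
    by (simp only: Q.hom_add[OF qc ec] Q.hom_minus[OF qc ec])
  then have "I +> e = \<zero>\<^bsub>R Quot I\<^esub>"
    by (rule Q.S.idempotent_eq_zero_if_nilpotent_plus_minus[OF Q.hom_nilpotent[OF q] Q.hom_idempotent[OF e]])
  then show ?thesis using rcos_eq_zero_iff[OF I ec] by simp
qed

lemma jacobson_nil_if_GWNC:
  assumes G: "GWNC R"
  shows "jacobson R \<subseteq> nilpotents R"
proof
  fix j assume j: "j \<in> jacobson R"
  then have jc: "j \<in> carrier R" using jacobson_subset by blast
  show "j \<in> nilpotents R"
  proof (cases "j \<in> Units R")
    case True
    then have "j [^] (0::nat) = \<zero>" using jacobson_Units_trivial[OF j] by simp
    then show ?thesis by (rule nilpotentsI[OF jc])
  next
    case False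
    then obtain q e where q: "q \<in> nilpotents R" and e: "e \<in> idempotents R"
      and dec: "j = q \<oplus> e \<or> j = q \<ominus> e" using G jc unfolding GWNC_def by blast
    then have "e \<in> jacobson R"
      using idempotent_in_ideal_if_nilpotent_plus_minus[OF jacobson_ideal q e] j by blast
    then have "e = \<zero>" by (rule idempotent_in_jacobson_eq_zero[OF e])
    then show ?thesis using dec q nilpotents_subset by (auto simp: minus_eq)
  qed
qed

end

theorem proposition2p8:
  fixes R :: "('a, 'b) ring_scheme" and I :: "'a set"
  assumes "ring R" and "nil_ideal I R"
  shows "(GWNC R \<longleftrightarrow> GWNC (R Quot I)) \<and>
         (GWNC R \<longleftrightarrow> jacobson R \<subseteq> nilpotents R \<and> GWNC (R Quot jacobson R))"
proof -
  interpret ring R by fact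
  have I: "ideal I R" and nil: "I \<subseteq> nilpotents R" using assms(2) unfolding nil_ideal_def by auto
  have "GWNC R \<longleftrightarrow> GWNC (R Quot I)" by (rule GWNC_iff_GWNC_Quot[OF I nil])
  moreover have "GWNC R \<longleftrightarrow> jacobson R \<subseteq> nilpotents R \<and> GWNC (R Quot jacobson R)"
    using GWNC_iff_GWNC_Quot[OF jacobson_ideal] jacobson_nil_if_GWNC by blast
  ultimately show ?thesis ..
qed

end
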